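(* Let $U:G\to\mathrm{Aut}(\mathcal{H}_{\rm kin})$ be a unitary representation with $U(G)\subset\mathcal{P}_n$, and let $\underline U:\ell^2(G)\to\mathcal{B}(\mathcal{H}_{\rm kin})$ be its associated $*$-algebra representation. Then the following are equivalent: (1) $U$ is faithful as a group representation and $-I\notin U(G)$; (2) $\underline U$ is faithful as a $*$-algebra representation (i.e. $\ker\underline U=\{0\}$).
   Context: $\mathcal{H}_{\rm kin}=(\mathbb{C}^2)^{\otimes n}$, $\mathcal{P}_n$ is the $n$-qubit Pauli group, $G=\mathbb{Z}_2^{\times(n-k)}$ with $0<k<n$. $\ell^2(G)$ is the group algebra of $G$: formal complex linear combinations $\sum_g f(g)\,g$, with product extending $g\star h=gh$ bilinearly and involution extending $g^*=g^{-1}$ antilinearly. $\underline U$ is the unique linear map with $\underline U(g)=U(g)$ for $g\in G$. *)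

theory Defs
  imports "Jordan_Normal_Form.Matrix"
begin

definition cadj :: "complex mat \<Rightarrow> complex mat" where
  "cadj A = mat (dim_col A) (dim_row A) (\<lambda>(i,j). cnj (A $$ (j,i)))"

definition unitary_mat :: "nat \<Rightarrow> complex mat \<Rightarrow> bool" where
  "unitary_mat d A \<longleftrightarrow> A \<in> carrier_mat d d \<and> A * cadj A = 1\<^sub>m d \<and> cadj A * A = 1\<^sub>m d"

definition kron :: "complex mat \<Rightarrow> complex mat \<Rightarrow> complex mat" where
  "kron A B = mat (dim_row A * dim_row B) (dim_col A * dim_col B)
     (\<lambda>(i,j). A $$ (i div dim_row B, j div dim_col B) * B $$ (i mod dim_row B, j mod dim_col B))"

definition kron_list :: "complex mat list \<Rightarrow> complex mat" where
  "kron_list Ps = foldr kron Ps (1\<^sub>m 1)"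

definition pauli_I :: "complex mat" where "pauli_I = mat_of_rows_list 2 [[1,0],[0,1]]"
definition pauli_X :: "complex mat" where "pauli_X = mat_of_rows_list 2 [[0,1],[1,0]]"
definition pauli_Y :: "complex mat" where "pauli_Y = mat_of_rows_list 2 [[0,-\<i>],[\<i>,0]]"
definition pauli_Z :: "complex mat" where "pauli_Z = mat_of_rows_list 2 [[1,0],[0,-1]]"

definition pauli_group :: "nat \<Rightarrow> complex mat set" where
  "pauli_group n = {(\<i> ^ c) \<cdot>\<^sub>m kron_list Ps | c Ps.
      c < 4 \<and> length Ps = n \<and> set Ps \<subseteq> {pauli_I, pauli_X, pauli_Y, pauli_Z}}"

definition Zgrp :: "nat \<Rightarrow> bool list set" where
  "Zgrp m = {xs. length xs = m}"

definition zmult :: "bool list \<Rightarrow> bool list \<Rightarrow> bool list" where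
  "zmult xs ys = map2 (\<noteq>) xs ys"

definition unitary_rep :: "nat \<Rightarrow> nat \<Rightarrow> (bool list \<Rightarrow> complex mat) \<Rightarrow> bool" where
  "unitary_rep m n U \<longleftrightarrow>
     (\<forall>g\<in>Zgrp m. unitary_mat (2^n) (U g)) \<and>
     (\<forall>g\<in>Zgrp m. \<forall>h\<in>Zgrp m. U (zmult g h) = U g * U h)"

text \<open>Linear extension to the group algebra: f (restricted to G) represents \<Sum>_g f(g) g.\<close>
definition lin_ext :: "nat \<Rightarrow> nat \<Rightarrow> (bool list \<Rightarrow> complex mat) \<Rightarrow> (bool list \<Rightarrow> complex) \<Rightarrow> complex mat" where
  "lin_ext m n U f = mat (2^n) (2^n) (\<lambda>(i,j). \<Sum>g\<in>Zgrp m. f g * U g $$ (i,j))"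

end

theory Submission
  imports Defs
begin

text \<open>Since the Pauli group consists of scalar multiples of tensor products of I, X, Y, Z, and
  X, Y, Z are traceless, every element of \<open>\<P>\<^sub>n\<close> is either a scalar matrix or traceless.
  If U is faithful and misses \<open>-I\<close>, the only scalar in its image is \<open>U(e) = I\<close> (a scalar
  involution is \<open>\<plusminus>I\<close>), so the matrices \<open>U(g)\<close> are orthogonal for the trace form:
  \<open>tr (U(g) U(h)) = 2\<^sup>n \<delta>\<^sub>g\<^sub>h\<close>.  Hence the coefficient \<open>f(h)\<close> is recovered from
  \<open>U(f)\<close> as \<open>2\<^sup>-\<^sup>n tr (U(f) U(h))\<close>, and \<open>U(f) = 0\<close> forces \<open>f = 0\<close>.
  Conversely, a repeated value \<open>U(a) = U(b)\<close> or \<open>U(b) = -I\<close> gives the nonzero kernel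
  elements \<open>a - b\<close> and \<open>e + b\<close>.\<close>

definition mat_trace :: "'a::comm_monoid_add mat \<Rightarrow> 'a" where
  "mat_trace A = (\<Sum>i<dim_row A. A $$ (i,i))"

lemma sum_lessThan_mult_div_mod:
  "(\<Sum>i<a * b. f (i div b) * g (i mod b)) = (\<Sum>p<a. f p) * (\<Sum>q<b. g q :: 'a::comm_semiring_1)"
  for a b :: nat
proof (induction a)
  case 0
  then show ?case by simp
next
  case (Suc a)
  let ?F = "\<lambda>i. f (i div b) * g (i mod b)"
  have "(\<Sum>i<Suc a * b. ?F i) = sum ?F {0..<a * b} + sum ?F {a * b..<a * b + b}"
    by (simp add: lessThan_atLeast0 sum.atLeastLessThan_concat add.commute)
  also have "sum ?F {a * b..<a * b + b} = sum (\<lambda>q. ?F (q + a * b)) {0..<b}"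
    using sum.shift_bounds_nat_ivl[of ?F 0 "a * b" b] by (simp add: add.commute)
  also have "\<dots> = (\<Sum>q<b. f a * g q)"
    by (simp add: lessThan_atLeast0)
  finally show ?case
    using Suc by (simp add: sum_distrib_left distrib_right sum.distrib lessThan_atLeast0)
qed

lemma mat_trace_smult:
  "A \<in> carrier_mat d d \<Longrightarrow> mat_trace (c \<cdot>\<^sub>m A) = c * mat_trace (A :: 'a::comm_semiring_0 mat)"
  by (simp add: mat_trace_def sum_distrib_left)

lemma mat_trace_one: "mat_trace (1\<^sub>m d :: 'a::comm_semiring_1 mat) = of_nat d"
  by (simp add: mat_trace_def)

lemma mat_trace_mult:
  assumes "A \<in> carrier_mat d d" and "B \<in> carrier_mat d d"
  shows "mat_trace (A * B) = (\<Sum>i<d. \<Sum>j<d. A $$ (i,j) * B $$ (j,i))"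
  using assms by (simp add: mat_trace_def scalar_prod_def lessThan_atLeast0)

lemma dim_kron [simp]:
  "dim_row (kron A B) = dim_row A * dim_row B"
  "dim_col (kron A B) = dim_col A * dim_col B"
  by (simp_all add: kron_def)

lemma mat_trace_kron:
  assumes "A \<in> carrier_mat a a" and "B \<in> carrier_mat b b"
  shows "mat_trace (kron A B) = mat_trace A * mat_trace B"
proof -
  have "mat_trace (kron A B) = (\<Sum>i<a * b. A $$ (i div b, i div b) * B $$ (i mod b, i mod b))"
    using assms by (simp add: mat_trace_def kron_def)
  also have "\<dots> = mat_trace A * mat_trace B"
    using assms sum_lessThan_mult_div_mod[where a=a and b=b and f="\<lambda>p. A $$ (p,p)" and g="\<lambda>q. B $$ (q,q)"]
    by (simp add: mat_trace_def)
  finally show ?thesis .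
qed

lemma kron_one_mat: "kron (1\<^sub>m a) (1\<^sub>m b) = 1\<^sub>m (a * b)"
proof (rule eq_matI)
  fix i j
  assume "i < dim_row (1\<^sub>m (a * b))" and "j < dim_col (1\<^sub>m (a * b))"
  then have ij: "i < a * b" "j < a * b" by auto
  then have "b > 0" by (cases b) auto
  then have "i div b < a" "j div b < a" "i mod b < b" "j mod b < b"
    using ij by (simp_all add: less_mult_imp_div_less)
  moreover have "(i div b = j div b \<and> i mod b = j mod b) \<longleftrightarrow> i = j"
    by (metis div_mult_mod_eq)
  ultimately show "kron (1\<^sub>m a) (1\<^sub>m b) $$ (i, j) = 1\<^sub>m (a * b) $$ (i, j)"
    using ij by (auto simp: kron_def)
qed (auto simp: kron_def)

abbreviation paulis :: "complex mat set" where
  "paulis \<equiv> {pauli_I, pauli_X, pauli_Y, pauli_Z}"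

lemma pauli_carrier_mat: "P \<in> paulis \<Longrightarrow> P \<in> carrier_mat 2 2"
  by (auto simp: pauli_I_def pauli_X_def pauli_Y_def pauli_Z_def mat_of_rows_list_def)

lemma pauli_I_eq_one_mat: "pauli_I = 1\<^sub>m 2"
  by (rule eq_matI) (auto simp: pauli_I_def mat_of_rows_list_def less_2_cases_iff)

lemma mat_trace_pauli_XYZ: "mat_trace pauli_X = 0" "mat_trace pauli_Y = 0" "mat_trace pauli_Z = 0"
  by (simp_all add: mat_trace_def pauli_X_def pauli_Y_def pauli_Z_def mat_of_rows_list_def
      numeral_2_eq_2 lessThan_Suc)

lemma kron_list_carrier_mat:
  "set Ps \<subseteq> paulis \<Longrightarrow> kron_list Ps \<in> carrier_mat (2 ^ length Ps) (2 ^ length Ps)"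
proof (induction Ps)
  case Nil
  then show ?case by (simp add: kron_list_def)
next
  case (Cons P Ps)
  then have "P \<in> carrier_mat 2 2" by (simp add: pauli_carrier_mat)
  with Cons show ?case by (auto simp: kron_list_def)
qed

lemma kron_list_pauli_I: "set Ps \<subseteq> {pauli_I} \<Longrightarrow> kron_list Ps = 1\<^sub>m (2 ^ length Ps)"
  by (induction Ps) (auto simp: kron_list_def pauli_I_eq_one_mat kron_one_mat)

lemma mat_trace_kron_list_non_identity:
  assumes "set Ps \<subseteq> paulis" and "\<exists>P\<in>set Ps. P \<noteq> pauli_I"
  shows "mat_trace (kron_list Ps) = 0"
  using assms
proof (induction Ps)
  case Nil
  then show ?case by simp
next
  case (Cons P Ps)
  have "P \<in> carrier_mat 2 2" and "kron_list Ps \<in> carrier_mat (2 ^ length Ps) (2 ^ length Ps)"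
    using Cons.prems by (simp_all add: pauli_carrier_mat kron_list_carrier_mat)
  then have "mat_trace (kron_list (P # Ps)) = mat_trace P * mat_trace (kron_list Ps)"
    by (simp add: kron_list_def mat_trace_kron)
  moreover have "mat_trace P = 0 \<or> mat_trace (kron_list Ps) = 0"
    using Cons mat_trace_pauli_XYZ by (cases "P = pauli_I") auto
  ultimately show ?case by simp
qed

lemma pauli_group_scalar_or_traceless:
  assumes "P \<in> pauli_group n"
  shows "(\<exists>z. P = z \<cdot>\<^sub>m 1\<^sub>m (2 ^ n)) \<or> mat_trace P = 0"
proof -
  obtain c Ps where P: "P = (\<i> ^ c) \<cdot>\<^sub>m kron_list Ps" and "length Ps = n" and Ps: "set Ps \<subseteq> paulis"
    using assms unfolding pauli_group_def by blast
  show ?thesis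
  proof (cases "set Ps \<subseteq> {pauli_I}")
    case True
    then show ?thesis using P \<open>length Ps = n\<close> kron_list_pauli_I by auto
  next
    case False
    then have "mat_trace (kron_list Ps) = 0"
      using Ps mat_trace_kron_list_non_identity by blast
    then show ?thesis
      using P mat_trace_smult[OF kron_list_carrier_mat[OF Ps]] by simp
  qed
qed

lemma finite_Zgrp: "finite (Zgrp m)"
  using finite_lists_length_eq[of "UNIV :: bool set" m] by (simp add: Zgrp_def)

lemma replicate_False_in_Zgrp: "replicate m False \<in> Zgrp m"
  by (simp add: Zgrp_def)

lemma zmult_in_Zgrp: "g \<in> Zgrp m \<Longrightarrow> h \<in> Zgrp m \<Longrightarrow> zmult g h \<in> Zgrp m"
  by (simp add: Zgrp_def zmult_def)

lemma zmult_eq_replicate_False_iff: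
  assumes "g \<in> Zgrp m" and "h \<in> Zgrp m"
  shows "zmult g h = replicate m False \<longleftrightarrow> g = h"
  using assms by (auto simp: Zgrp_def zmult_def list_eq_iff_nth_eq)

lemma unitary_rep_carrier_mat:
  "unitary_rep m n U \<Longrightarrow> g \<in> Zgrp m \<Longrightarrow> U g \<in> carrier_mat (2 ^ n) (2 ^ n)"
  by (simp add: unitary_rep_def unitary_mat_def)

lemma unitary_rep_identity:
  assumes rep: "unitary_rep m n U"
  shows "U (replicate m False) = 1\<^sub>m (2 ^ n)"
proof -
  let ?e = "replicate m False" and ?d = "2 ^ n :: nat"
  have Ue: "U ?e \<in> carrier_mat ?d ?d" and inv: "U ?e * cadj (U ?e) = 1\<^sub>m ?d"
    using rep replicate_False_in_Zgrp by (auto simp: unitary_rep_def unitary_mat_def)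
  have idem: "U ?e * U ?e = U ?e"
    using rep replicate_False_in_Zgrp zmult_eq_replicate_False_iff
    by (metis unitary_rep_def)
  have "cadj (U ?e) \<in> carrier_mat ?d ?d"
    using Ue by (simp add: cadj_def)
  then have "U ?e = U ?e * (U ?e * cadj (U ?e))"
    using Ue inv by simp
  also have "\<dots> = (U ?e * U ?e) * cadj (U ?e)"
    using Ue \<open>cadj (U ?e) \<in> carrier_mat ?d ?d\<close> by simp
  also have "\<dots> = 1\<^sub>m ?d"
    using idem inv by simp
  finally show ?thesis .
qed

lemma unitary_rep_square:
  assumes "unitary_rep m n U" and "g \<in> Zgrp m"
  shows "U g * U g = 1\<^sub>m (2 ^ n)"
  using assms unitary_rep_identity zmult_eq_replicate_False_iff by (metis unitary_rep_def)

lemma lin_ext_index: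
  "i < 2 ^ n \<Longrightarrow> j < 2 ^ n \<Longrightarrow> lin_ext m n U f $$ (i,j) = (\<Sum>g\<in>Zgrp m. f g * U g $$ (i,j))"
  by (simp add: lin_ext_def)

lemma lin_ext_carrier_mat: "lin_ext m n U f \<in> carrier_mat (2 ^ n) (2 ^ n)"
  by (simp add: lin_ext_def)

lemma mat_trace_lin_ext_mult:
  assumes U: "\<And>g. g \<in> Zgrp m \<Longrightarrow> U g \<in> carrier_mat (2 ^ n) (2 ^ n)"
    and B: "B \<in> carrier_mat (2 ^ n) (2 ^ n)"
  shows "mat_trace (lin_ext m n U f * B) = (\<Sum>g\<in>Zgrp m. f g * mat_trace (U g * B))"
proof -
  have "mat_trace (lin_ext m n U f * B)
      = (\<Sum>i<2 ^ n. \<Sum>j<2 ^ n. lin_ext m n U f $$ (i,j) * B $$ (j,i))"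
    using lin_ext_carrier_mat B by (rule mat_trace_mult)
  also have "\<dots> = (\<Sum>i<2 ^ n. \<Sum>j<2 ^ n. \<Sum>g\<in>Zgrp m. f g * (U g $$ (i,j) * B $$ (j,i)))"
    by (simp add: lin_ext_index sum_distrib_right mult.assoc)
  also have "\<dots> = (\<Sum>g\<in>Zgrp m. f g * (\<Sum>i<2 ^ n. \<Sum>j<2 ^ n. U g $$ (i,j) * B $$ (j,i)))"
    by (simp add: sum_distrib_left sum.swap[of _ "Zgrp m"])
  also have "\<dots> = (\<Sum>g\<in>Zgrp m. f g * mat_trace (U g * B))"
    by (intro sum.cong refl) (simp add: mat_trace_mult[OF U B])
  finally show ?thesis .
qed

lemma faithful_pauli_rep_trace:
  assumes rep: "unitary_rep m n U" and pauli: "U ` Zgrp m \<subseteq> pauli_group n"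
    and inj: "inj_on U (Zgrp m)" and no_minus_one: "- 1\<^sub>m (2 ^ n) \<notin> U ` Zgrp m"
    and g: "g \<in> Zgrp m" and g_ne: "g \<noteq> replicate m False"
  shows "mat_trace (U g) = 0"
proof (rule ccontr)
  let ?d = "2 ^ n :: nat"
  assume "mat_trace (U g) \<noteq> 0"
  then obtain z where Ug: "U g = z \<cdot>\<^sub>m 1\<^sub>m ?d"
    using pauli_group_scalar_or_traceless pauli g by blast
  have "(z * z) \<cdot>\<^sub>m 1\<^sub>m ?d = z \<cdot>\<^sub>m (z \<cdot>\<^sub>m 1\<^sub>m ?d)"
    by (rule eq_matI) auto
  also have "\<dots> = U g * U g"
    unfolding Ug by (subst mult_smult_assoc_mat) auto
  also have "\<dots> = 1\<^sub>m ?d"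
    using unitary_rep_square[OF rep g] .
  finally have "((z * z) \<cdot>\<^sub>m 1\<^sub>m ?d) $$ (0,0) = (1\<^sub>m ?d :: complex mat) $$ (0,0)"
    by simp
  then have "z\<^sup>2 = 1"
    by (simp add: power2_eq_square)
  then consider "z = 1" | "z = -1"
    using power2_eq_1_iff by blast
  then show False
  proof cases
    case 1
    then have "U g = U (replicate m False)"
      using Ug unitary_rep_identity[OF rep] by (auto intro!: eq_matI)
    then show False
      using inj g g_ne replicate_False_in_Zgrp by (metis inj_onD)
  next
    case 2
    then have "U g = - 1\<^sub>m ?d"
      using Ug by (auto intro!: eq_matI)
    then show False
      using no_minus_one g by (metis image_eqI)
  qed
qed

lemma faithful_pauli_rep_trace_mult:
  assumes rep: "unitary_rep m n U" and "U ` Zgrp m \<subseteq> pauli_group n"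
    and "inj_on U (Zgrp m)" and "- 1\<^sub>m (2 ^ n) \<notin> U ` Zgrp m"
    and g: "g \<in> Zgrp m" and h: "h \<in> Zgrp m"
  shows "mat_trace (U g * U h) = (if g = h then 2 ^ n else 0)"
proof (cases "g = h")
  case True
  then show ?thesis
    using unitary_rep_square[OF rep h] by (simp add: mat_trace_one)
next
  case False
  have "U g * U h = U (zmult g h)"
    using rep g h by (simp add: unitary_rep_def)
  moreover have "mat_trace (U (zmult g h)) = 0"
    using assms False zmult_in_Zgrp zmult_eq_replicate_False_iff
    by (intro faithful_pauli_rep_trace) auto
  ultimately show ?thesis
    using False by simp
qed

lemma faithful_pauli_rep_lin_ext_injective:
  assumes rep: "unitary_rep m n U" and "U ` Zgrp m \<subseteq> pauli_group n"
    and "inj_on U (Zgrp m)" and "- 1\<^sub>m (2 ^ n) \<notin> U ` Zgrp m"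
    and zero: "lin_ext m n U f = 0\<^sub>m (2 ^ n) (2 ^ n)" and h: "h \<in> Zgrp m"
  shows "f h = 0"
proof -
  have U: "\<And>g. g \<in> Zgrp m \<Longrightarrow> U g \<in> carrier_mat (2 ^ n) (2 ^ n)"
    using rep by (rule unitary_rep_carrier_mat)
  have "0 = mat_trace (lin_ext m n U f * U h)"
    using zero U[OF h] by (simp add: left_mult_zero_mat mat_trace_def)
  also have "\<dots> = (\<Sum>g\<in>Zgrp m. f g * (if g = h then 2 ^ n else 0))"
    using U h assms(1-4) by (simp add: mat_trace_lin_ext_mult faithful_pauli_rep_trace_mult)
  also have "\<dots> = f h * 2 ^ n"
    using finite_Zgrp h by (simp add: if_distrib[of "\<lambda>x. _ * x"] cong: if_cong)
  finally show ?thesis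
    by simp
qed

lemma lin_ext_two_point:
  assumes U: "\<And>g. g \<in> Zgrp m \<Longrightarrow> U g \<in> carrier_mat (2 ^ n) (2 ^ n)"
    and a: "a \<in> Zgrp m" and b: "b \<in> Zgrp m"
  shows "lin_ext m n U (\<lambda>x. (if x = a then 1 else 0) + (if x = b then s else 0)) = U a + s \<cdot>\<^sub>m U b"
proof (rule eq_matI)
  fix i j
  assume "i < dim_row (U a + s \<cdot>\<^sub>m U b)" and "j < dim_col (U a + s \<cdot>\<^sub>m U b)"
  then have ij: "i < 2 ^ n" "j < 2 ^ n"
    using U[OF b] by auto
  have "(\<Sum>g\<in>Zgrp m. ((if g = a then 1 else 0) + (if g = b then s else 0)) * U g $$ (i,j))
      = (\<Sum>g\<in>Zgrp m. (if g = a then U g $$ (i,j) else 0) + (if g = b then s * U g $$ (i,j) else 0))"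
    by (intro sum.cong) (auto simp: algebra_simps)
  also have "\<dots> = U a $$ (i,j) + s * U b $$ (i,j)"
    using finite_Zgrp a b by (simp add: sum.distrib)
  finally show "lin_ext m n U (\<lambda>x. (if x = a then 1 else 0) + (if x = b then s else 0)) $$ (i,j)
      = (U a + s \<cdot>\<^sub>m U b) $$ (i,j)"
    using ij U[OF a] U[OF b] by (simp add: lin_ext_index)
qed (use U[OF a] U[OF b] in \<open>auto simp: lin_ext_def\<close>)

lemma lin_ext_injective_imp_faithful:
  assumes rep: "unitary_rep m n U"
    and inj: "\<forall>f. lin_ext m n U f = 0\<^sub>m (2 ^ n) (2 ^ n) \<longrightarrow> (\<forall>g\<in>Zgrp m. f g = 0)"
  shows "inj_on U (Zgrp m) \<and> - 1\<^sub>m (2 ^ n) \<notin> U ` Zgrp m"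
proof
  let ?d = "2 ^ n :: nat" and ?e = "replicate m False"
  have U: "\<And>g. g \<in> Zgrp m \<Longrightarrow> U g \<in> carrier_mat ?d ?d"
    using rep by (rule unitary_rep_carrier_mat)
  show "inj_on U (Zgrp m)"
  proof (rule inj_onI, rule ccontr)
    fix a b
    assume a: "a \<in> Zgrp m" and b: "b \<in> Zgrp m" and "U a = U b" and "a \<noteq> b"
    then have "U a + (-1) \<cdot>\<^sub>m U b = 0\<^sub>m ?d ?d"
      using U[OF b] by (auto intro!: eq_matI)
    then have "lin_ext m n U (\<lambda>x. (if x = a then 1 else 0) + (if x = b then -1 else 0)) = 0\<^sub>m ?d ?d"
      using lin_ext_two_point[OF U a b] by simp
    then show False
      using inj a \<open>a \<noteq> b\<close> by fastforce
  qed
  show "- 1\<^sub>m ?d \<notin> U ` Zgrp m"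
  proof
    assume "- 1\<^sub>m ?d \<in> U ` Zgrp m"
    then obtain b where b: "b \<in> Zgrp m" and Ub: "U b = - 1\<^sub>m ?d"
      by auto
    have "(- 1\<^sub>m ?d :: complex mat) $$ (0,0) \<noteq> 1\<^sub>m ?d $$ (0,0)"
      by simp
    then have "- 1\<^sub>m ?d \<noteq> (1\<^sub>m ?d :: complex mat)"
      by metis
    then have "b \<noteq> ?e"
      using Ub unitary_rep_identity[OF rep] by auto
    have "U ?e + 1 \<cdot>\<^sub>m U b = 0\<^sub>m ?d ?d"
      using Ub unitary_rep_identity[OF rep] by (auto intro!: eq_matI)
    then have "lin_ext m n U (\<lambda>x. (if x = ?e then 1 else 0) + (if x = b then 1 else 0)) = 0\<^sub>m ?d ?d"
      using lin_ext_two_point[OF U replicate_False_in_Zgrp b] by simp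
    then show False
      using inj replicate_False_in_Zgrp \<open>b \<noteq> ?e\<close> by fastforce
  qed
qed

theorem mainTheorem19:
  fixes n k :: nat and U :: "bool list \<Rightarrow> complex mat"
  assumes "0 < k" and "k < n"
    and "unitary_rep (n - k) n U"
    and "U ` Zgrp (n - k) \<subseteq> pauli_group n"
  shows "(inj_on U (Zgrp (n - k)) \<and> - (1\<^sub>m (2^n)) \<notin> U ` Zgrp (n - k))
     \<longleftrightarrow> (\<forall>f. lin_ext (n - k) n U f = 0\<^sub>m (2^n) (2^n) \<longrightarrow> (\<forall>g\<in>Zgrp (n - k). f g = 0))"
  using faithful_pauli_rep_lin_ext_injective[OF assms(3,4)] lin_ext_injective_imp_faithful[OF assms(3)]
  by blast

end
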